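(* If $G$ is a chordal graph of treewidth $w$ and with a resolving set of size $k$, then $w\leq 3^k$.
   Context: A graph is chordal if it has no induced cycle of length at least $4$. A set $R$ of vertices of a graph $G$ is a resolving set if for each pair $u,v$ of distinct vertices there is $x\in R$ with $d(x,u)\neq d(x,v)$. *)

theory Defs
  imports Main
begin

definition graph :: "'a set \<Rightarrow> ('a \<Rightarrow> 'a \<Rightarrow> bool) \<Rightarrow> bool" where
  "graph V E \<longleftrightarrow> finite V \<and> (\<forall>x y. E x y \<longrightarrow> E y x) \<and> (\<forall>x. \<not> E x x)
     \<and> (\<forall>x y. E x y \<longrightarrow> x \<in> V \<and> y \<in> V)"

definition is_path :: "('a \<Rightarrow> 'a \<Rightarrow> bool) \<Rightarrow> 'a list \<Rightarrow> bool" where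
  "is_path E xs \<longleftrightarrow> xs \<noteq> [] \<and> distinct xs \<and> (\<forall>i. Suc i < length xs \<longrightarrow> E (xs ! i) (xs ! Suc i))"

definition connected_on :: "'a set \<Rightarrow> ('a \<Rightarrow> 'a \<Rightarrow> bool) \<Rightarrow> bool" where
  "connected_on S E \<longleftrightarrow> (\<forall>u\<in>S. \<forall>v\<in>S. \<exists>xs. is_path E xs \<and> hd xs = u \<and> last xs = v \<and> set xs \<subseteq> S)"

text \<open>Distance: number of edges of a shortest path (for connected graphs).\<close>

definition gdist :: "('a \<Rightarrow> 'a \<Rightarrow> bool) \<Rightarrow> 'a \<Rightarrow> 'a \<Rightarrow> nat" where
  "gdist E u v = (LEAST n. \<exists>xs. is_path E xs \<and> hd xs = u \<and> last xs = v \<and> length xs = Suc n)"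

definition is_cycle :: "('a \<Rightarrow> 'a \<Rightarrow> bool) \<Rightarrow> 'a list \<Rightarrow> bool" where
  "is_cycle E xs \<longleftrightarrow> length xs \<ge> 3 \<and> is_path E xs \<and> E (last xs) (hd xs)"

definition induced_cycle :: "'a set \<Rightarrow> ('a \<Rightarrow> 'a \<Rightarrow> bool) \<Rightarrow> 'a list \<Rightarrow> bool" where
  "induced_cycle V E xs \<longleftrightarrow> is_cycle E xs \<and> set xs \<subseteq> V \<and>
     (\<forall>i<length xs. \<forall>j<length xs. E (xs ! i) (xs ! j) \<longrightarrow>
        j = Suc i mod length xs \<or> i = Suc j mod length xs)"

definition chordal :: "'a set \<Rightarrow> ('a \<Rightarrow> 'a \<Rightarrow> bool) \<Rightarrow> bool" where
  "chordal V E \<longleftrightarrow> \<not> (\<exists>xs. induced_cycle V E xs \<and> length xs \<ge> 4)"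

definition resolving_set :: "'a set \<Rightarrow> ('a \<Rightarrow> 'a \<Rightarrow> bool) \<Rightarrow> 'a set \<Rightarrow> bool" where
  "resolving_set V E R \<longleftrightarrow> R \<subseteq> V \<and>
     (\<forall>u\<in>V. \<forall>v\<in>V. u \<noteq> v \<longrightarrow> (\<exists>x\<in>R. gdist E x u \<noteq> gdist E x v))"

definition is_tree :: "nat set \<Rightarrow> (nat \<Rightarrow> nat \<Rightarrow> bool) \<Rightarrow> bool" where
  "is_tree N T \<longleftrightarrow> graph N T \<and> N \<noteq> {} \<and> connected_on N T \<and> \<not> (\<exists>xs. is_cycle T xs)"

definition tree_decomposition ::
  "'a set \<Rightarrow> ('a \<Rightarrow> 'a \<Rightarrow> bool) \<Rightarrow> nat set \<Rightarrow> (nat \<Rightarrow> nat \<Rightarrow> bool) \<Rightarrow> (nat \<Rightarrow> 'a set) \<Rightarrow> bool" where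
  "tree_decomposition V E N T B \<longleftrightarrow> is_tree N T \<and>
     (\<forall>t\<in>N. B t \<subseteq> V) \<and>
     (\<forall>v\<in>V. \<exists>t\<in>N. v \<in> B t) \<and>
     (\<forall>u v. E u v \<longrightarrow> (\<exists>t\<in>N. u \<in> B t \<and> v \<in> B t)) \<and>
     (\<forall>v\<in>V. connected_on {t\<in>N. v \<in> B t} T)"

definition decomp_width :: "nat set \<Rightarrow> (nat \<Rightarrow> 'a set) \<Rightarrow> nat" where
  "decomp_width N B = Max ((\<lambda>t. card (B t)) ` N) - 1"

definition treewidth :: "'a set \<Rightarrow> ('a \<Rightarrow> 'a \<Rightarrow> bool) \<Rightarrow> nat" where
  "treewidth V E = (LEAST w. \<exists>N T B. tree_decomposition V E N T B \<and> decomp_width N B = w)"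

end

theory Submission
  imports Defs
begin

text \<open>A chordal graph has a tree decomposition whose bags are cliques: remove a simplicial vertex
  (one exists by Dirac's lemma), decompose the rest, and attach a leaf bag holding the vertex
  and its neighbourhood. If \<open>R\<close> is resolving, every clique has at most \<open>2^|R|\<close> vertices, since
  the distances from a fixed vertex to a clique take at most two consecutive values. Hence the
  treewidth is at most \<open>2^k - 1 \<le> 3^k\<close>.\<close>

section \<open>Paths\<close>

definition chordless :: "('a \<Rightarrow> 'a \<Rightarrow> bool) \<Rightarrow> 'a list \<Rightarrow> bool" where
  "chordless E P \<longleftrightarrow>
     (\<forall>i<length P. \<forall>j<length P. E (P ! i) (P ! j) \<longrightarrow> j = Suc i \<or> i = Suc j)"

lemma is_path_mono: "(\<And>x y. E x y \<Longrightarrow> E' x y) \<Longrightarrow> is_path E xs \<Longrightarrow> is_path E' xs"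
  unfolding is_path_def by blast

lemma is_path_singleton [simp]: "is_path E [x]"
  unfolding is_path_def by simp

lemma is_path_Cons:
  assumes "is_path E P" "v \<notin> set P" "E v (hd P)"
  shows "is_path E (v # P)"
  unfolding is_path_def
proof (intro conjI allI impI)
  have ne: "P \<noteq> []" and d: "distinct P" and ed: "\<And>i. Suc i < length P \<Longrightarrow> E (P!i) (P!Suc i)"
    using assms(1) unfolding is_path_def by auto
  show "v # P \<noteq> []" by simp
  show "distinct (v # P)" using d assms(2) by simp
  fix i assume i: "Suc i < length (v # P)"
  show "E ((v # P) ! i) ((v # P) ! Suc i)"
  proof (cases i)
    case 0 then show ?thesis using assms(3) ne by (simp add: hd_conv_nth)
  next
    case (Suc j) then show ?thesis using ed[of j] i by simp
  qed
qed

lemma is_path_snoc: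
  assumes "is_path E P" "v \<notin> set P" "E (last P) v"
  shows "is_path E (P @ [v])"
  unfolding is_path_def
proof (intro conjI allI impI)
  have ne: "P \<noteq> []" and d: "distinct P" and ed: "\<And>i. Suc i < length P \<Longrightarrow> E (P!i) (P!Suc i)"
    using assms(1) unfolding is_path_def by auto
  show "P @ [v] \<noteq> []" by simp
  show "distinct (P @ [v])" using d assms(2) by simp
  fix i assume i: "Suc i < length (P @ [v])"
  show "E ((P @ [v]) ! i) ((P @ [v]) ! Suc i)"
  proof (cases "Suc i < length P")
    case True then show ?thesis using ed[OF True] by (simp add: nth_append)
  next
    case False
    then have "Suc i = length P" using i by simp
    moreover from this ne have "last P = P ! i" by (metis diff_Suc_1 last_conv_nth)
    ultimately show ?thesis using assms(3) by (simp add: nth_append)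
  qed
qed

lemma is_path_drop:
  assumes "is_path E P" "k < length P"
  shows "is_path E (drop k P)" "hd (drop k P) = P ! k"
  using assms unfolding is_path_def by (auto simp: add.commute hd_drop_conv_nth)

lemma is_path_take:
  assumes "is_path E P" "k < length P"
  shows "is_path E (take (Suc k) P)" "hd (take (Suc k) P) = hd P" "last (take (Suc k) P) = P ! k"
  using assms unfolding is_path_def by (auto simp: hd_conv_nth last_conv_nth)

lemma is_path_shortcut:
  assumes P: "is_path E P" and ij: "Suc i < j" "j < length P" and e: "E (P ! i) (P ! j)"
  shows "is_path E (take (Suc i) P @ drop j P)"
proof -
  let ?Q = "take (Suc i) P @ drop j P"
  have "distinct ?Q"
    using P ij unfolding is_path_def by (auto simp: set_take_disj_set_drop_if_distinct)
  moreover have "E (?Q ! k) (?Q ! Suc k)" if k: "Suc k < length ?Q" for k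
  proof -
    consider "k < i" | "k = i" | "i < k" by linarith
    then show ?thesis
    proof cases
      case 1
      then show ?thesis using P ij unfolding is_path_def by (auto simp: nth_append)
    next
      case 2
      then show ?thesis using e ij by (auto simp: nth_append)
    next
      case 3
      then have "?Q ! k = P ! (j + (k - Suc i))" "?Q ! Suc k = P ! Suc (j + (k - Suc i))"
        using ij k by (auto simp: nth_append Suc_diff_Suc)
      then show ?thesis using P 3 ij k unfolding is_path_def by auto
    qed
  qed
  ultimately show ?thesis unfolding is_path_def using ij by auto
qed

text \<open>A shortest path inside the vertex set of a given path has no chords: a chord would
  shortcut it.\<close>

lemma obtain_chordless_subpath:
  assumes sym: "\<And>x y. E x y \<Longrightarrow> E y x" and irr: "\<And>x. \<not> E x x" and P: "is_path E P"
  obtains Q where "is_path E Q" "hd Q = hd P" "last Q = last P" "set Q \<subseteq> set P" "chordless E Q"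
proof -
  define sub where "sub Q \<longleftrightarrow> is_path E Q \<and> hd Q = hd P \<and> last Q = last P \<and> set Q \<subseteq> set P"
    for Q
  obtain Q where Q: "sub Q" and min: "\<And>Q'. sub Q' \<Longrightarrow> length Q \<le> length Q'"
    using ex_has_least_nat[of sub P length] P unfolding sub_def by blast
  have no_long_chord: False if ij: "Suc i < j" "j < length Q" "E (Q ! i) (Q ! j)" for i j
  proof -
    let ?Q' = "take (Suc i) Q @ drop j Q"
    have "set ?Q' \<subseteq> set Q" using set_take_subset set_drop_subset by fastforce
    then have "sub ?Q'"
      using Q is_path_shortcut[of E Q i j] ij unfolding sub_def by (cases Q) auto
    then show False using min[of ?Q'] ij by simp
  qed
  have "chordless E Q"
    unfolding chordless_def
  proof (intro allI impI)
    fix i j assume "i < length Q" "j < length Q" "E (Q ! i) (Q ! j)"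
    moreover have "i \<noteq> j" using irr \<open>E (Q ! i) (Q ! j)\<close> by auto
    ultimately show "j = Suc i \<or> i = Suc j"
      using no_long_chord[of i j] no_long_chord[of j i] sym by (metis Suc_lessI linorder_neqE_nat)
  qed
  with Q that show thesis unfolding sub_def by blast
qed

lemma rtranclp_imp_path:
  assumes "R\<^sup>*\<^sup>* u v" "\<And>x y. R x y \<Longrightarrow> E x y"
  shows "\<exists>P. is_path E P \<and> hd P = u \<and> last P = v \<and> (\<forall>z\<in>set P. R\<^sup>*\<^sup>* u z)"
  using assms(1)
proof (induction rule: converse_rtranclp_induct)
  case base
  then show ?case by (intro exI[of _ "[v]"]) auto
next
  case (step u u')
  then obtain P where P: "is_path E P" "hd P = u'" "last P = v" "\<forall>z\<in>set P. R\<^sup>*\<^sup>* u' z"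
    by blast
  have reach: "\<forall>z\<in>set P. R\<^sup>*\<^sup>* u z" using P(4) step(1) by (meson converse_rtranclp_into_rtranclp)
  show ?case
  proof (cases "u \<in> set P")
    case True
    then obtain k where k: "k < length P" "P ! k = u" by (meson in_set_conv_nth)
    then show ?thesis using is_path_drop[OF P(1) k(1)] P reach set_drop_subset[of k P]
      by (intro exI[of _ "drop k P"]) (auto simp: subset_iff)
  next
    case False
    have "P \<noteq> []" using P unfolding is_path_def by auto
    then show ?thesis using is_path_Cons[OF P(1) False] P reach step(1) assms(2)
      by (intro exI[of _ "u # P"]) auto
  qed
qed

section \<open>Chordal graphs and simplicial vertices\<close>

abbreviation induced :: "('a \<Rightarrow> 'a \<Rightarrow> bool) \<Rightarrow> 'a set \<Rightarrow> 'a \<Rightarrow> 'a \<Rightarrow> bool" where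
  "induced E H x y \<equiv> E x y \<and> x \<in> H \<and> y \<in> H"

definition clique :: "('a \<Rightarrow> 'a \<Rightarrow> bool) \<Rightarrow> 'a set \<Rightarrow> bool" where
  "clique E K \<longleftrightarrow> (\<forall>x\<in>K. \<forall>y\<in>K. x \<noteq> y \<longrightarrow> E x y)"

definition simplicial :: "('a \<Rightarrow> 'a \<Rightarrow> bool) \<Rightarrow> 'a \<Rightarrow> bool" where
  "simplicial E w \<longleftrightarrow> clique E {x. E w x}"

lemma graph_induced:
  assumes "graph V E" "H \<subseteq> V"
  shows "graph H (induced E H)"
  using assms unfolding graph_def by (auto intro: finite_subset)

lemma chordal_induced:
  assumes "chordal V E" "H \<subseteq> V"
  shows "chordal H (induced E H)"
proof -
  have "induced_cycle V E xs" if "induced_cycle H (induced E H) xs" for xs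
  proof -
    have "is_path E xs"
      using that is_path_mono[of "induced E H" E] unfolding induced_cycle_def is_cycle_def by blast
    then show ?thesis using that assms(2) unfolding induced_cycle_def is_cycle_def
      by auto (meson nth_mem subsetD)
  qed
  then show ?thesis using assms unfolding chordal_def by blast
qed

lemma induced_cycle_apex:
  assumes g: "graph V E" and a: "a \<in> V" "a \<notin> set P"
    and P: "is_path E P" "length P \<ge> 3" "chordless E P" "set P \<subseteq> V"
    and ends: "E a (hd P)" "E a (last P)"
    and inner: "\<And>i. 0 < i \<Longrightarrow> i < length P - 1 \<Longrightarrow> \<not> E a (P ! i)"
  shows "induced_cycle V E (a # P)"
proof -
  have sym: "\<And>x y. E x y \<Longrightarrow> E y x" and irr: "\<And>x. \<not> E x x" using g unfolding graph_def by auto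
  let ?L = "a # P"
  have "is_cycle E ?L"
    using is_path_Cons[OF P(1) a(2) ends(1)] P(2) ends(2) sym unfolding is_cycle_def by auto
  moreover have "j = Suc i mod length ?L \<or> i = Suc j mod length ?L"
    if ij: "i < length ?L" "j < length ?L" "E (?L ! i) (?L ! j)" for i j
  proof -
    have apex_nbr: "j = 1 \<or> j = length P" if "0 < j" "j < length ?L" "E a (?L ! j)" for j
    proof -
      have "\<not> (0 < j - 1 \<and> j - 1 < length P - 1)" using that inner[of "j - 1"] by auto
      moreover have "j < Suc (length P)" using that by simp
      ultimately show ?thesis using that(1) by linarith
    qed
    consider "i = 0" | "j = 0" | "0 < i" "0 < j" by blast
    then show ?thesis
    proof cases
      case 1
      then show ?thesis using ij apex_nbr[of j] irr P(2) by (cases "j = 0") auto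
    next
      case 2
      then show ?thesis using ij apex_nbr[of i] irr sym P(2) by (cases "i = 0") auto
    next
      case 3
      then have "E (P ! (i - 1)) (P ! (j - 1))" "i - 1 < length P" "j - 1 < length P"
        using ij by auto
      then have "j - 1 = Suc (i - 1) \<or> i - 1 = Suc (j - 1)"
        using P(3) unfolding chordless_def by blast
      then show ?thesis using ij 3 by auto
    qed
  qed
  ultimately show ?thesis unfolding induced_cycle_def using a P(4) by auto
qed

text \<open>Otherwise a shortest such path together with \<open>a\<close> is an induced cycle of length at least 4.\<close>

lemma chordal_path_apex:
  assumes g: "graph V E" and ch: "chordal V E" and a: "a \<in> V"
    and P: "is_path E P" "hd P = x" "last P = y" and xy: "x \<noteq> y" "E a x" "E a y"
    and avoid: "\<And>z. z \<in> set P \<Longrightarrow> z \<noteq> x \<Longrightarrow> z \<noteq> y \<Longrightarrow> z \<in> V \<and> z \<noteq> a \<and> \<not> E a z"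
  shows "E x y"
proof (rule ccontr)
  assume nxy: "\<not> E x y"
  have sym: "\<And>x y. E x y \<Longrightarrow> E y x" and irr: "\<And>x. \<not> E x x"
    and inV: "\<And>x y. E x y \<Longrightarrow> x \<in> V \<and> y \<in> V" using g unfolding graph_def by auto
  obtain Q where Q: "is_path E Q" "hd Q = x" "last Q = y" "set Q \<subseteq> set P" "chordless E Q"
    using obtain_chordless_subpath[OF sym irr P(1)] P by metis
  have ne: "Q \<noteq> []" and dQ: "distinct Q" using Q(1) unfolding is_path_def by auto
  have first: "Q ! 0 = x" and final: "Q ! (length Q - 1) = y"
    using Q ne by (simp_all add: hd_conv_nth last_conv_nth)
  have "length Q \<noteq> 1" using first final xy by auto
  moreover have "length Q \<noteq> 2" using Q(1) first final nxy unfolding is_path_def by force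
  moreover have "length Q \<noteq> 0" using ne by simp
  ultimately have len: "length Q \<ge> 3" by linarith
  have inner: "Q ! i \<in> V \<and> Q ! i \<noteq> a \<and> \<not> E a (Q ! i)" if "0 < i" "i < length Q - 1" for i
  proof -
    have i: "i < length Q" using that by linarith
    have "Q ! i \<noteq> x" "Q ! i \<noteq> y"
      using that ne first final nth_eq_iff_index_eq[OF dQ i, of 0]
        nth_eq_iff_index_eq[OF dQ i, of "length Q - 1"] by auto
    moreover have "Q ! i \<in> set P" using Q(4) i by auto
    ultimately show ?thesis using avoid by blast
  qed
  have "a \<notin> set Q"
  proof
    assume "a \<in> set Q"
    then obtain i where "i < length Q" "Q ! i = a" by (meson in_set_conv_nth)
    then show False using inner[of i] first final irr xy by (cases "i = 0"; cases "i = length Q - 1") auto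
  qed
  moreover have "set Q \<subseteq> V"
  proof
    fix z assume "z \<in> set Q"
    then obtain i where i: "i < length Q" "Q ! i = z" by (meson in_set_conv_nth)
    consider "i = 0" | "i = length Q - 1" | "0 < i" "i < length Q - 1" using i(1) by linarith
    then show "z \<in> V" using inner[of i] i first final inV xy by cases auto
  qed
  ultimately have "induced_cycle V E (a # Q)"
    using induced_cycle_apex[OF g a _ Q(1) len Q(5)] Q xy inner by auto
  then show False using ch len unfolding chordal_def by fastforce
qed

definition component :: "('a \<Rightarrow> 'a \<Rightarrow> bool) \<Rightarrow> 'a set \<Rightarrow> 'a \<Rightarrow> 'a set" where
  "component E W c = {z. (induced E W)\<^sup>*\<^sup>* c z}"

definition boundary :: "('a \<Rightarrow> 'a \<Rightarrow> bool) \<Rightarrow> 'a set \<Rightarrow> 'a set" where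
  "boundary E C = {x. x \<notin> C \<and> (\<exists>c\<in>C. E c x)}"

lemma component_subset: "c \<in> W \<Longrightarrow> component E W c \<subseteq> W"
  unfolding component_def by (auto elim: rtranclp.cases)

lemma component_closed:
  "z \<in> component E W c \<Longrightarrow> z \<in> W \<Longrightarrow> y \<in> W \<Longrightarrow> E z y \<Longrightarrow> y \<in> component E W c"
  unfolding component_def by (simp add: rtranclp.rtrancl_into_rtrancl)

lemma component_path:
  assumes sym: "\<And>x y. E x y \<Longrightarrow> E y x" and uv: "u \<in> component E W c" "v \<in> component E W c"
  obtains P where "is_path E P" "hd P = u" "last P = v" "set P \<subseteq> component E W c"
proof -
  have "symp (induced E W)" using sym by (auto intro: sympI)
  then have "(induced E W)\<^sup>*\<^sup>* u c" using uv(1) symp_rtranclp unfolding component_def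
    by (auto dest: sympD)
  have cu: "\<And>z. (induced E W)\<^sup>*\<^sup>* u z \<Longrightarrow> z \<in> component E W c"
    using uv(1) unfolding component_def by (auto intro: rtranclp_trans)
  have "(induced E W)\<^sup>*\<^sup>* u v"
    using uv \<open>(induced E W)\<^sup>*\<^sup>* u c\<close> unfolding component_def by (auto intro: rtranclp_trans)
  from rtranclp_imp_path[OF this, of E] cu that show thesis by blast
qed

text \<open>The boundary of a component of the non-neighbours of \<open>a\<close> is a minimal separator, hence a
  clique.\<close>

lemma boundary_component_clique:
  fixes V :: "'a set" and E :: "'a \<Rightarrow> 'a \<Rightarrow> bool" and a :: 'a
  defines "W \<equiv> {z \<in> V. z \<noteq> a \<and> \<not> E a z}"
  assumes g: "graph V E" and ch: "chordal V E" and a: "a \<in> V" and c0: "c0 \<in> W"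
  shows "boundary E (component E W c0) \<subseteq> {z. E a z}" "clique E (boundary E (component E W c0))"
proof -
  let ?C = "component E W c0"
  have sym: "\<And>x y. E x y \<Longrightarrow> E y x"
    and inV: "\<And>x y. E x y \<Longrightarrow> x \<in> V \<and> y \<in> V" using g unfolding graph_def by auto
  have CW: "?C \<subseteq> W" using component_subset[OF c0] .
  show nbr: "boundary E ?C \<subseteq> {z. E a z}"
  proof
    fix x assume "x \<in> boundary E ?C"
    then obtain c where c: "c \<in> ?C" "E c x" "x \<notin> ?C" unfolding boundary_def by auto
    then have "x \<notin> W" using component_closed[of c E W c0 x] CW by auto
    moreover have "x \<noteq> a" using c CW sym unfolding W_def by auto
    ultimately show "x \<in> {z. E a z}" using c inV unfolding W_def by auto
  qed
  show "clique E (boundary E ?C)"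
    unfolding clique_def
  proof (intro ballI impI)
    fix x y assume x: "x \<in> boundary E ?C" and y: "y \<in> boundary E ?C" and xy: "x \<noteq> y"
    obtain c1 c2 where c: "c1 \<in> ?C" "E c1 x" "c2 \<in> ?C" "E c2 y" "x \<notin> ?C" "y \<notin> ?C"
      using x y unfolding boundary_def by auto
    obtain P0 where P0: "is_path E P0" "hd P0 = c1" "last P0 = c2" "set P0 \<subseteq> ?C"
      using component_path[OF sym c(1,3)] by blast
    have "P0 \<noteq> []" using P0(1) unfolding is_path_def by simp
    have "x \<notin> set P0" "y \<notin> set P0" using P0(4) c(5,6) by auto
    then have "is_path E (P0 @ [y])" using is_path_snoc[OF P0(1)] P0(3) c(4) by blast
    then have P: "is_path E (x # P0 @ [y])"
      using is_path_Cons \<open>P0 \<noteq> []\<close> \<open>x \<notin> set P0\<close> P0(2) c(2) xy sym by fastforce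
    show "E x y"
    proof (rule chordal_path_apex[OF g ch a P])
      show "x \<noteq> y" "E a x" "E a y" using xy x y nbr by auto
      show "z \<in> V \<and> z \<noteq> a \<and> \<not> E a z" if "z \<in> set (x # P0 @ [y])" "z \<noteq> x" "z \<noteq> y" for z
        using that P0(4) CW unfolding W_def by auto
    qed simp_all
  qed
qed

lemma simplicial_induced:
  assumes "simplicial (induced E H) w" "w \<in> H" "{x. E w x} \<subseteq> H"
  shows "simplicial E w"
  using assms unfolding simplicial_def clique_def by blast

lemma exists_simplicial_nonadjacent:
  assumes "graph V E" "chordal V E" "a \<in> V" "z \<in> V" "z \<noteq> a" "\<not> E a z"
  shows "\<exists>w\<in>V. w \<noteq> a \<and> \<not> E a w \<and> simplicial E w"
  using assms
proof (induction "card V" arbitrary: V E a z rule: less_induct)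
  case less
  note g = less.prems(1) and ch = less.prems(2) and a = less.prems(3)
  have sym: "\<And>x y. E x y \<Longrightarrow> E y x" and irr: "\<And>x. \<not> E x x" and fin: "finite V"
    and inV: "\<And>x y. E x y \<Longrightarrow> x \<in> V \<and> y \<in> V" using g unfolding graph_def by auto
  define W where "W = {z\<in>V. z \<noteq> a \<and> \<not> E a z}"
  define C where "C = component E W z"
  define S where "S = boundary E C"
  define H where "H = C \<union> S"
  have z: "z \<in> W" using less.prems unfolding W_def by simp
  have CW: "C \<subseteq> W" using component_subset[OF z] unfolding C_def .
  have SN: "S \<subseteq> {y. E a y}" and Scl: "clique E S"
    using boundary_component_clique[OF g ch a z[unfolded W_def]] unfolding S_def C_def W_def by auto
  have HV: "H \<subseteq> V" using CW SN inV unfolding H_def W_def by auto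
  have aH: "a \<notin> H" using CW SN irr unfolding H_def W_def by auto
  have cardH: "card H < card V" using HV aH a fin by (metis psubsetI psubset_card_mono)
  have gH: "graph H (induced E H)" using graph_induced[OF g HV] .
  have chH: "chordal H (induced E H)" using chordal_induced[OF ch HV] .
  have found: "\<exists>w\<in>V. w \<noteq> a \<and> \<not> E a w \<and> simplicial E w"
    if "w \<in> C" "simplicial (induced E H) w" for w
  proof -
    have "{x. E w x} \<subseteq> H" using that(1) unfolding H_def S_def boundary_def by auto
    then have "simplicial E w" using simplicial_induced[OF that(2)] that(1) H_def by blast
    then show ?thesis using that CW unfolding W_def by auto
  qed
  have zC: "z \<in> C" unfolding C_def component_def by simp
  (* Applied in H, the induction hypothesis yields a simplicial vertex of H; choosing the vertex it
     must avoid inside the clique S whenever possible keeps that vertex out of S, hence in C. *)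
  show ?case
  proof (cases "clique E H")
    case True
    then have "simplicial (induced E H) z" unfolding simplicial_def clique_def by auto
    then show ?thesis using found zC by blast
  next
    case False
    then obtain z1 z2 where z12: "z1 \<in> H" "z2 \<in> H" "z1 \<noteq> z2" "\<not> E z1 z2"
      unfolding clique_def by blast
    show ?thesis
    proof (cases "\<exists>s\<in>S. \<exists>y\<in>H. y \<noteq> s \<and> \<not> E s y")
      case True
      then obtain s y where sy: "s \<in> S" "y \<in> H" "y \<noteq> s" "\<not> E s y" by blast
      then obtain w where w: "w \<in> H" "w \<noteq> s" "\<not> E s w" "simplicial (induced E H) w"
        using less.hyps[OF cardH gH chH, of s y] H_def by auto
      have "w \<notin> S" using Scl w sy unfolding clique_def by auto
      then show ?thesis using found w H_def by auto
    next
      case False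
      obtain w where w: "w \<in> H" "w \<noteq> z1" "\<not> E z1 w" "simplicial (induced E H) w"
        using less.hyps[OF cardH gH chH z12(1,2)] z12 by auto
      have "w \<notin> S" using False z12(1) w(2,3) sym by metis
      then show ?thesis using found w H_def by auto
    qed
  qed
qed

lemma exists_simplicial:
  assumes "graph V E" "chordal V E" "V \<noteq> {}"
  shows "\<exists>w\<in>V. simplicial E w"
proof (cases "clique E V")
  case True
  then have "simplicial E w" if "w \<in> V" for w
    using assms(1) unfolding simplicial_def clique_def graph_def by blast
  then show ?thesis using assms(3) by blast
next
  case False
  then obtain a z where "a \<in> V" "z \<in> V" "z \<noteq> a" "\<not> E a z" unfolding clique_def by blast
  then show ?thesis using exists_simplicial_nonadjacent[OF assms(1,2)] by blast
qed

section \<open>Clique tree decompositions\<close>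

definition add_leaf :: "('a \<Rightarrow> 'a \<Rightarrow> bool) \<Rightarrow> 'a \<Rightarrow> 'a \<Rightarrow> 'a \<Rightarrow> 'a \<Rightarrow> bool" where
  "add_leaf T n s x y \<longleftrightarrow> T x y \<or> (x = n \<and> y = s) \<or> (x = s \<and> y = n)"

lemma connected_on_mono:
  assumes "\<And>x y. T x y \<Longrightarrow> T' x y" "connected_on S T"
  shows "connected_on S T'"
  using assms is_path_mono[of T T'] unfolding connected_on_def by metis

lemma connected_on_singleton: "connected_on {x} T"
  unfolding connected_on_def by (intro ballI exI[of _ "[x]"]) auto

lemma connected_on_add_leaf:
  assumes c: "connected_on S T" and s: "s \<in> S" and n: "n \<notin> S"
  shows "connected_on (insert n S) (add_leaf T n s)"
proof -
  let ?T = "add_leaf T n s"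
  have c': "connected_on S ?T" by (rule connected_on_mono[OF _ c]) (simp add: add_leaf_def)
  have to_n: "\<exists>P. is_path ?T P \<and> hd P = u \<and> last P = n \<and> set P \<subseteq> insert n S" if u: "u \<in> S" for u
  proof -
    obtain P where P: "is_path ?T P" "hd P = u" "last P = s" "set P \<subseteq> S"
      using c' s u unfolding connected_on_def by blast
    have "P \<noteq> []" using P(1) unfolding is_path_def by simp
    moreover have "is_path ?T (P @ [n])" using is_path_snoc[OF P(1)] P n unfolding add_leaf_def by auto
    ultimately show ?thesis using P by (intro exI[of _ "P @ [n]"]) auto
  qed
  have from_n: "\<exists>P. is_path ?T P \<and> hd P = n \<and> last P = v \<and> set P \<subseteq> insert n S" if v: "v \<in> S" for v
  proof -
    obtain P where P: "is_path ?T P" "hd P = s" "last P = v" "set P \<subseteq> S"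
      using c' s v unfolding connected_on_def by blast
    have "P \<noteq> []" using P(1) unfolding is_path_def by simp
    moreover have "is_path ?T (n # P)" using is_path_Cons[OF P(1)] P n unfolding add_leaf_def by auto
    ultimately show ?thesis using P by (intro exI[of _ "n # P"]) auto
  qed
  show ?thesis
    unfolding connected_on_def
  proof (intro ballI)
    fix u v assume "u \<in> insert n S" "v \<in> insert n S"
    then consider "u = n" "v = n" | "u = n" "v \<in> S" | "u \<in> S" "v = n" | "u \<in> S" "v \<in> S" by blast
    then show "\<exists>P. is_path ?T P \<and> hd P = u \<and> last P = v \<and> set P \<subseteq> insert n S"
    proof cases
      case 1 then show ?thesis by (intro exI[of _ "[n]"]) auto
    next
      case 2 then show ?thesis using from_n by blast
    next
      case 3 then show ?thesis using to_n by blast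
    next
      case 4 then show ?thesis using c' unfolding connected_on_def by blast
    qed
  qed
qed

lemma is_cycle_neighbours:
  assumes cy: "is_cycle E xs" and v: "v \<in> set xs"
  obtains p q where "p \<noteq> q" "E p v" "E v q"
proof -
  have len: "length xs \<ge> 3" and d: "distinct xs" and ne: "xs \<noteq> []"
    and ed: "\<And>i. Suc i < length xs \<Longrightarrow> E (xs ! i) (xs ! Suc i)"
    and wrap: "E (xs ! (length xs - 1)) (xs ! 0)"
    using cy unfolding is_cycle_def is_path_def by (auto simp: hd_conv_nth last_conv_nth)
  have neq: "xs ! i \<noteq> xs ! j" if "i < length xs" "j < length xs" "i \<noteq> j" for i j
    using nth_eq_iff_index_eq[OF d that(1,2)] that(3) by simp
  obtain i where i: "i < length xs" "xs ! i = v" using v by (meson in_set_conv_nth)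
  consider "i = 0" | "i = length xs - 1" "0 < i" | "0 < i" "i < length xs - 1" using i by linarith
  then show thesis
  proof cases
    case 1
    have "xs ! (length xs - 1) \<noteq> xs ! 1" using neq[of "length xs - 1" 1] len by simp
    then show thesis using that[of "xs ! (length xs - 1)" "xs ! 1"] wrap ed[of 0] 1 i len by simp
  next
    case 2
    then have "Suc (i - 1) = i" by simp
    then have "E (xs ! (i - 1)) v" using ed[of "i - 1"] i by metis
    moreover have "xs ! (i - 1) \<noteq> xs ! 0" using neq[of "i - 1" 0] 2 len ne by simp
    ultimately show thesis using that[of "xs ! (i - 1)" "xs ! 0"] wrap 2 i by simp
  next
    case 3
    then have "Suc (i - 1) = i" by simp
    then have "E (xs ! (i - 1)) v" using ed[of "i - 1"] i by metis
    moreover have "xs ! (i - 1) \<noteq> xs ! Suc i" using neq[of "i - 1" "Suc i"] 3 by simp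
    ultimately show thesis using that[of "xs ! (i - 1)" "xs ! Suc i"] ed[of i] 3 i by simp
  qed
qed

lemma is_tree_add_leaf:
  assumes tr: "is_tree N T" and n: "n \<notin> N" and s: "s \<in> N"
  shows "is_tree (insert n N) (add_leaf T n s)"
proof -
  let ?T = "add_leaf T n s"
  have g: "graph N T" and c: "connected_on N T" and ac: "\<not> (\<exists>xs. is_cycle T xs)"
    using tr unfolding is_tree_def by auto
  have inN: "\<And>x y. T x y \<Longrightarrow> x \<in> N \<and> y \<in> N" using g unfolding graph_def by auto
  have "graph (insert n N) ?T" using g s n unfolding graph_def add_leaf_def by auto
  moreover have "\<not> is_cycle ?T xs" for xs
  proof
    assume cy: "is_cycle ?T xs"
    show False
    proof (cases "n \<in> set xs")
      case True
      then obtain p q where "p \<noteq> q" "?T p n" "?T n q" by (rule is_cycle_neighbours[OF cy])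
      then show False using inN n unfolding add_leaf_def by auto
    next
      case False
      then have T: "T x y" if "?T x y" "x \<in> set xs" "y \<in> set xs" for x y
        using that unfolding add_leaf_def by auto
      have "xs \<noteq> []" "distinct xs" "length xs \<ge> 3" "?T (last xs) (hd xs)"
        and ed: "\<And>i. Suc i < length xs \<Longrightarrow> ?T (xs ! i) (xs ! Suc i)"
        using cy unfolding is_cycle_def is_path_def by auto
      moreover have "T (xs ! i) (xs ! Suc i)" if "Suc i < length xs" for i
        using T[OF ed[OF that]] that by simp
      ultimately have "is_cycle T xs"
        using T[of "last xs" "hd xs"] unfolding is_cycle_def is_path_def by simp
      then show False using ac by blast
    qed
  qed
  ultimately show ?thesis using connected_on_add_leaf[OF c s n] unfolding is_tree_def by blast
qed

lemma tree_decomposition_add_vertex: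
  assumes td: "tree_decomposition (V - {v}) (induced E (V - {v})) N T B"
    and g: "graph V E" and v: "v \<in> V" and n: "n \<notin> N" and s: "s \<in> N"
    and nbrs: "{y. E v y} \<subseteq> B s"
  shows "tree_decomposition V E (insert n N) (add_leaf T n s) (B(n := insert v {y. E v y}))"
proof -
  let ?T = "add_leaf T n s" and ?B = "B(n := insert v {y. E v y})"
  have sym: "\<And>x y. E x y \<Longrightarrow> E y x" and inV: "\<And>x y. E x y \<Longrightarrow> x \<in> V \<and> y \<in> V"
    using g unfolding graph_def by auto
  have tr: "is_tree N T" and BV: "\<forall>t\<in>N. B t \<subseteq> V - {v}" and cover: "\<forall>u\<in>V - {v}. \<exists>t\<in>N. u \<in> B t"
    and edges: "\<forall>x y. induced E (V - {v}) x y \<longrightarrow> (\<exists>t\<in>N. x \<in> B t \<and> y \<in> B t)"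
    and subtree: "\<forall>u\<in>V - {v}. connected_on {t\<in>N. u \<in> B t} T"
    using td unfolding tree_decomposition_def by auto
  have old: "?B t = B t" if "t \<in> N" for t using that n by auto
  have "\<exists>t\<in>insert n N. x \<in> ?B t \<and> y \<in> ?B t" if xy: "E x y" for x y
  proof (cases "x = v \<or> y = v")
    case True
    then show ?thesis using xy sym by auto
  next
    case False
    then obtain t where "t \<in> N" "x \<in> B t" "y \<in> B t" using edges inV[OF xy] xy by blast
    then show ?thesis using old by auto
  qed
  moreover have "connected_on {t\<in>insert n N. u \<in> ?B t} ?T" if u: "u \<in> V" for u
  proof -
    consider "u = v" | "u \<noteq> v" "E v u" | "u \<noteq> v" "\<not> E v u" by blast
    then show ?thesis
    proof cases
      case 1
      then have "{t\<in>insert n N. u \<in> ?B t} = {n}" using BV by auto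
      then show ?thesis using connected_on_singleton by simp
    next
      case 2
      then have "{t\<in>insert n N. u \<in> ?B t} = insert n {t\<in>N. u \<in> B t}" using old by auto
      moreover have "s \<in> {t\<in>N. u \<in> B t}" using s nbrs 2 by auto
      ultimately show ?thesis using connected_on_add_leaf[of _ T s n] subtree u 2 n by simp
    next
      case 3
      then have "{t\<in>insert n N. u \<in> ?B t} = {t\<in>N. u \<in> B t}" using old n by auto
      then show ?thesis using connected_on_mono[of T ?T] subtree u 3 unfolding add_leaf_def by simp
    qed
  qed
  moreover have "\<forall>t\<in>insert n N. ?B t \<subseteq> V" using BV v nbrs inV by auto
  moreover have "\<forall>u\<in>V. \<exists>t\<in>insert n N. u \<in> ?B t" using cover old by (metis Diff_iff insertCI
        insert_iff fun_upd_same singletonD)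
  ultimately show ?thesis
    using is_tree_add_leaf[OF tr n s] unfolding tree_decomposition_def by blast
qed

lemma tree_decomposition_empty:
  assumes "graph {} E"
  shows "tree_decomposition {} E {0} (\<lambda>_ _. False) (\<lambda>_. {})"
proof -
  have "is_tree {0} (\<lambda>_ _. False)"
    unfolding is_tree_def graph_def is_cycle_def using connected_on_singleton by auto
  then show ?thesis using assms unfolding tree_decomposition_def graph_def by auto
qed

text \<open>Covering every clique by some bag keeps the induction going: the neighbourhood of the
  removed simplicial vertex is a clique.\<close>

lemma chordal_clique_tree_decomposition:
  assumes "graph V E" "chordal V E"
  shows "\<exists>N T B. tree_decomposition V E N T B \<and> (\<forall>t\<in>N. clique E (B t)) \<and>
           (\<forall>K\<subseteq>V. clique E K \<longrightarrow> (\<exists>t\<in>N. K \<subseteq> B t))"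
  using assms
proof (induction "card V" arbitrary: V E rule: less_induct)
  case less
  note g = less.prems(1) and ch = less.prems(2)
  have sym: "\<And>x y. E x y \<Longrightarrow> E y x" and irr: "\<And>x. \<not> E x x" and fin: "finite V"
    and inV: "\<And>x y. E x y \<Longrightarrow> x \<in> V \<and> y \<in> V" using g unfolding graph_def by auto
  show ?case
  proof (cases "V = {}")
    case True
    then show ?thesis using tree_decomposition_empty[of E] g unfolding clique_def by auto
  next
    case False
    obtain v where v: "v \<in> V" "simplicial E v" using exists_simplicial[OF g ch False] by blast
    let ?V = "V - {v}" and ?Nb = "{y. E v y}"
    have "card ?V < card V" using card_Diff1_less[OF fin v(1)] .
    from less.hyps[OF this graph_induced[OF g] chordal_induced[OF ch]]
    obtain N T B where td: "tree_decomposition ?V (induced E ?V) N T B"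
      and cl: "\<forall>t\<in>N. clique (induced E ?V) (B t)"
      and cov: "\<forall>K\<subseteq>?V. clique (induced E ?V) K \<longrightarrow> (\<exists>t\<in>N. K \<subseteq> B t)"
      by blast
    have NbV: "?Nb \<subseteq> ?V" using inV irr by auto
    have "clique (induced E ?V) ?Nb" using v(2) NbV unfolding simplicial_def clique_def by auto
    then obtain s where s: "s \<in> N" "?Nb \<subseteq> B s" using cov NbV by blast
    have "finite N" using td unfolding tree_decomposition_def is_tree_def graph_def by auto
    then obtain n :: nat where n: "n \<notin> N" using ex_new_if_finite infinite_UNIV_nat by blast
    let ?B = "B(n := insert v ?Nb)"
    have "tree_decomposition V E (insert n N) (add_leaf T n s) ?B"
      using tree_decomposition_add_vertex[OF td g v(1) n s(1,2)] .
    moreover have "clique E (?B t)" if "t \<in> insert n N" for t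
    proof (cases "t = n")
      case True
      have "clique E (insert v ?Nb)" using v(2) sym unfolding simplicial_def clique_def by blast
      then show ?thesis using True by simp
    next
      case False
      then have "clique (induced E ?V) (B t)" using cl that by auto
      then show ?thesis using False unfolding clique_def by simp
    qed
    moreover have "\<exists>t\<in>insert n N. K \<subseteq> ?B t" if "K \<subseteq> V" "clique E K" for K
    proof (cases "v \<in> K")
      case True
      then have "K \<subseteq> insert v ?Nb" using that unfolding clique_def by auto
      then show ?thesis by auto
    next
      case False
      then have "K \<subseteq> ?V" "clique (induced E ?V) K" using that unfolding clique_def by auto
      then obtain t where "t \<in> N" "K \<subseteq> B t" using cov by blast
      moreover from this have "?B t = B t" using n by auto
      ultimately show ?thesis by (metis insertCI)
    qed
    ultimately show ?thesis by blast
  qed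
qed

lemma treewidth_le:
  assumes td: "tree_decomposition V E N T B" and bags: "\<And>t. t \<in> N \<Longrightarrow> card (B t) \<le> m"
  shows "treewidth V E \<le> m - 1"
proof -
  have "finite N" "N \<noteq> {}" using td unfolding tree_decomposition_def is_tree_def graph_def by auto
  then have "decomp_width N B \<le> m - 1" using bags unfolding decomp_width_def by (simp add: diff_le_mono)
  moreover have "treewidth V E \<le> decomp_width N B"
    unfolding treewidth_def using td by (intro Least_le) blast
  ultimately show ?thesis by linarith
qed

section \<open>Distances and resolving sets\<close>

lemma gdist_path:
  assumes "connected_on V E" "x \<in> V" "u \<in> V"
  obtains P where "is_path E P" "hd P = x" "last P = u" "length P = Suc (gdist E x u)"
proof -
  obtain P where P: "is_path E P" "hd P = x" "last P = u"
    using assms unfolding connected_on_def by blast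
  then have "length P = Suc (length P - 1)" unfolding is_path_def by simp
  with P have "\<exists>n P. is_path E P \<and> hd P = x \<and> last P = u \<and> length P = Suc n" by blast
  then have "\<exists>P. is_path E P \<and> hd P = x \<and> last P = u \<and> length P = Suc (gdist E x u)"
    unfolding gdist_def by (rule LeastI_ex)
  then show thesis using that by blast
qed

lemma gdist_le:
  assumes "is_path E P" "hd P = x" "last P = u" "length P = Suc n"
  shows "gdist E x u \<le> n"
  unfolding gdist_def using assms by (intro Least_le) blast

lemma gdist_adjacent:
  assumes "connected_on V E" "x \<in> V" "u \<in> V" "E u v"
  shows "gdist E x v \<le> Suc (gdist E x u)"
proof -
  obtain P where P: "is_path E P" "hd P = x" "last P = u" "length P = Suc (gdist E x u)"
    using gdist_path[OF assms(1-3)] .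
  show ?thesis
  proof (cases "v \<in> set P")
    case True
    then obtain i where i: "i < length P" "P ! i = v" by (meson in_set_conv_nth)
    have "gdist E x v \<le> i" using is_path_take[OF P(1) i(1)] P(2) i by (intro gdist_le) auto
    then show ?thesis using i P(4) by linarith
  next
    case False
    have "P \<noteq> []" using P(1) unfolding is_path_def by simp
    moreover have "is_path E (P @ [v])" using is_path_snoc[OF P(1) False] P(3) assms(4) by simp
    ultimately show ?thesis using P(2,4) by (intro gdist_le[of E "P @ [v]"]) auto
  qed
qed

text \<open>The distances from a vertex \<open>x\<close> to the vertices of a clique take at most two consecutive
  values, so a vertex of the clique is determined by the set of those \<open>x \<in> R\<close> at which its
  distance is the larger one.\<close>

lemma card_clique_le_resolving:
  assumes fin: "finite V" and c: "connected_on V E" and r: "resolving_set V E R"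
    and K: "K \<subseteq> V" "clique E K"
  shows "card K \<le> 2 ^ card R"
proof (cases "K = {}")
  case False
  have RV: "R \<subseteq> V" using r unfolding resolving_set_def by auto
  have finR: "finite R" and finK: "finite K" using RV K fin finite_subset by auto
  define m where "m x = Min (gdist E x ` K)" for x
  have two_values: "m x \<le> gdist E x u \<and> gdist E x u \<le> Suc (m x)" if "x \<in> R" "u \<in> K" for x u
  proof -
    have "m x \<in> gdist E x ` K" using finK False unfolding m_def by simp
    then obtain u0 where u0: "u0 \<in> K" "gdist E x u0 = m x" by auto
    have "gdist E x u \<le> Suc (gdist E x u0)"
      using gdist_adjacent[OF c, of x u0 u] K u0 that RV unfolding clique_def
      by (cases "u = u0") auto
    moreover have "m x \<le> gdist E x u" using that finK unfolding m_def by simp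
    ultimately show ?thesis using u0 by simp
  qed
  define far where "far u = {x\<in>R. gdist E x u \<noteq> m x}" for u
  have "inj_on far K"
  proof (rule inj_onI, rule ccontr)
    fix u v assume u: "u \<in> K" and v: "v \<in> K" and eq: "far u = far v" and uv: "u \<noteq> v"
    obtain x where x: "x \<in> R" "gdist E x u \<noteq> gdist E x v"
      using r u v uv K unfolding resolving_set_def by blast
    have "x \<in> far u \<longleftrightarrow> x \<in> far v" using eq by simp
    then show False using two_values[OF x(1) u] two_values[OF x(1) v] x unfolding far_def by auto
  qed
  moreover have "far ` K \<subseteq> Pow R" unfolding far_def by auto
  ultimately have "card K \<le> card (Pow R)" by (metis card_image card_mono finR finite_Pow_iff)
  then show ?thesis using finR by (simp add: card_Pow)
qed simp

theorem mainTheorem4: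
  fixes V :: "'a set" and E :: "'a \<Rightarrow> 'a \<Rightarrow> bool" and R :: "'a set" and k w :: nat
  assumes "graph V E" and "connected_on V E" and "chordal V E"
    and "treewidth V E = w"
    and "resolving_set V E R" and "card R = k"
  shows "w \<le> 3 ^ k"
proof -
  obtain N T B where td: "tree_decomposition V E N T B" and cl: "\<forall>t\<in>N. clique E (B t)"
    using chordal_clique_tree_decomposition[OF assms(1,3)] by blast
  have fin: "finite V" using assms(1) unfolding graph_def by simp
  have "card (B t) \<le> 2 ^ k" if t: "t \<in> N" for t
  proof -
    have "B t \<subseteq> V" using td t unfolding tree_decomposition_def by blast
    then show ?thesis using card_clique_le_resolving[OF fin assms(2,5)] cl t assms(6) by blast
  qed
  then have "w \<le> 2 ^ k - 1" using treewidth_le[OF td] assms(4) by blast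
  also have "\<dots> \<le> 3 ^ k" using power_mono[of "2::nat" 3 k] by linarith
  finally show ?thesis .
qed

end
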